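(* Let $H, W \ge 1$ be integers and $L=HW$. For each $s \in \{0,1,\dots,H+W-2\}$ let $i_{\min}(s)=\max(0,\,s-(W-1))$ and $i_{\max}(s)=\min(s,\,H-1)$. Let $\mathbf{d}^{(s)}$ be the ordered list of points $(i,\,s-i)$ and $\mathbf{a}^{(s)}$ the ordered list of points $(i,\,W-1-(s-i))$, in both cases for $i=i_{\min}(s),\dots,i_{\max}(s)$ in increasing order. Set $\operatorname{diag}(s)=\mathbf{d}^{(s)}$, $\operatorname{antidiag}(s)=\mathbf{a}^{(s)}$ for $s$ even and $\operatorname{diag}(s)=\operatorname{reverse}(\mathbf{d}^{(s)})$, $\operatorname{antidiag}(s)=\operatorname{reverse}(\mathbf{a}^{(s)})$ for $s$ odd. Let $\mathbf{p}_{\text{diag}}$ (resp. $\mathbf{p}_{\text{antidiag}}$) be the concatenation of $\operatorname{diag}(s)$ (resp. $\operatorname{antidiag}(s)$) over $s=0,1,\dots,H+W-2$. Then for each of the four point sequences $\mathbf{p}_{\text{diag}}$, $\mathbf{p}_{\text{antidiag}}$, $\operatorname{reverse}(\mathbf{p}_{\text{diag}})$, $\operatorname{reverse}(\mathbf{p}_{\text{antidiag}})$, any two consecutive points $\mathbf{p},\mathbf{q}$ satisfy $\|\mathbf{q}-\mathbf{p}\|_2 \le \sqrt{2}$.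
   Context: The grid is $\{0,\dots,H-1\}\times\{0,\dots,W-1\}$ with points $(i,j)$. $\operatorname{reverse}$ reverses a finite list; $\|\cdot\|_2$ is the Euclidean norm. These four sequences (flattened to raster indices $iW+j$) form the four rows of the TopoA-Scan forward index tensor. *)

theory Defs
  imports "HOL-Analysis.Analysis"
begin

text \<open>Grid points are pairs (i,j) of integers. For the distance we embed them into
  real \<times> real, whose norm is the Euclidean norm sqrt((x)^2 + (y)^2).\<close>

definition imin :: "int \<Rightarrow> int \<Rightarrow> int \<Rightarrow> int" where
  "imin H W s = max 0 (s - (W - 1))"

definition imax :: "int \<Rightarrow> int \<Rightarrow> int \<Rightarrow> int" where
  "imax H W s = min s (H - 1)"

definition dlist :: "int \<Rightarrow> int \<Rightarrow> int \<Rightarrow> (int \<times> int) list" where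
  "dlist H W s = map (\<lambda>i. (i, s - i)) [imin H W s..imax H W s]"

definition alist :: "int \<Rightarrow> int \<Rightarrow> int \<Rightarrow> (int \<times> int) list" where
  "alist H W s = map (\<lambda>i. (i, W - 1 - (s - i))) [imin H W s..imax H W s]"

definition diag :: "int \<Rightarrow> int \<Rightarrow> int \<Rightarrow> (int \<times> int) list" where
  "diag H W s = (if even s then dlist H W s else rev (dlist H W s))"

definition antidiag :: "int \<Rightarrow> int \<Rightarrow> int \<Rightarrow> (int \<times> int) list" where
  "antidiag H W s = (if even s then alist H W s else rev (alist H W s))"

definition p_diag :: "int \<Rightarrow> int \<Rightarrow> (int \<times> int) list" where
  "p_diag H W = concat (map (diag H W) [0..H + W - 2])"

definition p_antidiag :: "int \<Rightarrow> int \<Rightarrow> (int \<times> int) list" where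
  "p_antidiag H W = concat (map (antidiag H W) [0..H + W - 2])"

definition to_real_pt :: "int \<times> int \<Rightarrow> real \<times> real" where
  "to_real_pt p = (real_of_int (fst p), real_of_int (snd p))"

end

theory Submission
  imports Defs
begin

text \<open>Consecutive points of both scans are king-move neighbours of the grid, i.e. both
  coordinates differ by at most one, which bounds their Euclidean distance by \<open>sqrt 2\<close>.
  Inside a run \<open>i\<close> grows by one while \<open>s - i\<close> drops by one. Between runs \<open>s\<close> and \<open>s + 1\<close>
  the zigzag continues at the end where the previous run stopped: at \<open>i = imax s\<close> or at
  \<open>i = imin s\<close>, and both bounds grow by at most one when \<open>s\<close> does. The scan along
  anti-diagonals is the scan along diagonals followed by the reflection \<open>j \<mapsto> W - 1 - j\<close>,
  so both are handled at once by allowing any second coordinate \<open>g (s - i)\<close> with \<open>g\<close>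
  changing by at most one per step. Reversal preserves the neighbour relation.\<close>

definition grid_adjacent :: "int \<times> int \<Rightarrow> int \<times> int \<Rightarrow> bool" where
  "grid_adjacent p q \<longleftrightarrow> \<bar>fst q - fst p\<bar> \<le> 1 \<and> \<bar>snd q - snd p\<bar> \<le> 1"

lemma grid_adjacent_converse: "(\<lambda>p q. grid_adjacent q p) = grid_adjacent"
  by (auto simp: fun_eq_iff grid_adjacent_def abs_minus_commute)

lemma successively_grid_adjacent_rev:
  "successively grid_adjacent (rev ps) \<longleftrightarrow> successively grid_adjacent ps"
  unfolding successively_rev grid_adjacent_converse ..

lemma norm_to_real_pt_diff_le_sqrt2:
  assumes "grid_adjacent p q"
  shows "norm (to_real_pt q - to_real_pt p) \<le> sqrt 2"
proof -
  define a where "a = fst q - fst p"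
  define b where "b = snd q - snd p"
  have "\<bar>a\<bar> \<le> 1" "\<bar>b\<bar> \<le> 1"
    using assms by (simp_all add: a_def b_def grid_adjacent_def)
  then have "(real_of_int a)\<^sup>2 \<le> 1" "(real_of_int b)\<^sup>2 \<le> 1"
    by (metis abs_square_le_1 of_int_abs of_int_le_1_iff)+
  moreover have "to_real_pt q - to_real_pt p = (real_of_int a, real_of_int b)"
    by (simp add: to_real_pt_def a_def b_def)
  ultimately show ?thesis
    by (simp add: norm_Pair)
qed

lemma successively_concat:
  assumes "[] \<notin> set xss" and "\<forall>xs \<in> set xss. successively R xs"
    and "successively (\<lambda>xs ys. R (last xs) (hd ys)) xss"
  shows "successively R (concat xss)"
  using assms
proof (induction xss rule: induct_list012)
  case (3 xs ys zss)
  then have "successively R (concat (ys # zss))" by simp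
  with 3 show ?case
    by (auto simp: successively_append_iff hd_append)
qed simp_all

lemma successively_map_upto:
  fixes a b :: int
  assumes "\<And>i. a \<le> i \<Longrightarrow> i < b \<Longrightarrow> R (f i) (f (i + 1))"
  shows "successively R (map f [a..b])"
  unfolding successively_conv_nth
proof (intro allI impI)
  fix k assume "Suc k < length (map f [a..b])"
  then have "a + int k < b" by simp
  then show "R (map f [a..b] ! k) (map f [a..b] ! Suc k)"
    using assms[of "a + int k"] by (simp add: ac_simps)
qed

lemma imin_le_imax:
  assumes "H \<ge> 1" "W \<ge> 1" "0 \<le> s" "s \<le> H + W - 2"
  shows "imin H W s \<le> imax H W s"
  using assms by (simp add: imin_def imax_def)

definition diagonal_run :: "(int \<Rightarrow> int) \<Rightarrow> int \<Rightarrow> int \<Rightarrow> int \<Rightarrow> (int \<times> int) list" where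
  "diagonal_run g H W s = map (\<lambda>i. (i, g (s - i))) [imin H W s..imax H W s]"

definition zigzag_run :: "(int \<Rightarrow> int) \<Rightarrow> int \<Rightarrow> int \<Rightarrow> int \<Rightarrow> (int \<times> int) list" where
  "zigzag_run g H W s = (if even s then diagonal_run g H W s else rev (diagonal_run g H W s))"

lemma diag_eq_zigzag_run: "diag H W = zigzag_run (\<lambda>x. x) H W"
  by (simp add: fun_eq_iff diag_def dlist_def zigzag_run_def diagonal_run_def)

lemma antidiag_eq_zigzag_run: "antidiag H W = zigzag_run (\<lambda>x. W - 1 - x) H W"
  by (simp add: fun_eq_iff antidiag_def alist_def zigzag_run_def diagonal_run_def)

lemma hd_diagonal_run:
  "imin H W s \<le> imax H W s \<Longrightarrow> hd (diagonal_run g H W s) = (imin H W s, g (s - imin H W s))"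
  by (simp add: diagonal_run_def hd_map upto_rec1)

lemma last_diagonal_run:
  "imin H W s \<le> imax H W s \<Longrightarrow> last (diagonal_run g H W s) = (imax H W s, g (s - imax H W s))"
  by (simp add: diagonal_run_def last_map upto_rec2)

lemma successively_grid_adjacent_zigzag_run:
  assumes "\<And>x. \<bar>g (x + 1) - g x\<bar> \<le> 1"
  shows "successively grid_adjacent (zigzag_run g H W s)"
proof -
  have "\<bar>g (s - (i + 1)) - g (s - i)\<bar> \<le> 1" for i
    using assms[of "s - (i + 1)"] by (simp add: abs_minus_commute)
  then have "successively grid_adjacent (diagonal_run g H W s)"
    unfolding diagonal_run_def by (intro successively_map_upto) (simp add: grid_adjacent_def)
  then show ?thesis
    by (simp add: zigzag_run_def successively_grid_adjacent_rev del: successively_rev)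
qed

lemma grid_adjacent_next_run:
  assumes "\<And>x. \<bar>g (x + 1) - g x\<bar> \<le> 1" and "i' = i \<or> i' = i + 1"
  shows "grid_adjacent (i, g (s - i)) (i', g (s + 1 - i'))"
  using assms(2)
proof
  assume "i' = i"
  then show ?thesis
    using assms(1)[of "s - i"] by (simp add: grid_adjacent_def algebra_simps)
qed (simp add: grid_adjacent_def)

lemma grid_adjacent_zigzag_run_transition:
  assumes g: "\<And>x. \<bar>g (x + 1) - g x\<bar> \<le> 1"
    and "imin H W s \<le> imax H W s" and "imin H W (s + 1) \<le> imax H W (s + 1)"
  shows "grid_adjacent (last (zigzag_run g H W s)) (hd (zigzag_run g H W (s + 1)))"
proof (cases "even s")
  case True
  have "imax H W (s + 1) = imax H W s \<or> imax H W (s + 1) = imax H W s + 1"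
    by (auto simp: imax_def)
  then show ?thesis
    using True assms grid_adjacent_next_run[of g, OF g]
    by (simp add: zigzag_run_def hd_rev last_diagonal_run)
next
  case False
  have "imin H W (s + 1) = imin H W s \<or> imin H W (s + 1) = imin H W s + 1"
    by (auto simp: imin_def)
  then show ?thesis
    using False assms grid_adjacent_next_run[of g, OF g]
    by (simp add: zigzag_run_def last_rev hd_diagonal_run)
qed

lemma successively_grid_adjacent_zigzag_scan:
  assumes "H \<ge> 1" "W \<ge> 1" and g: "\<And>x. \<bar>g (x + 1) - g x\<bar> \<le> 1"
  shows "successively grid_adjacent (concat (map (zigzag_run g H W) [0..H + W - 2]))"
proof (rule successively_concat)
  show "[] \<notin> set (map (zigzag_run g H W) [0..H + W - 2])"
    using imin_le_imax[OF assms(1,2)] by (fastforce simp: zigzag_run_def diagonal_run_def)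
  show "\<forall>xs \<in> set (map (zigzag_run g H W) [0..H + W - 2]). successively grid_adjacent xs"
    using successively_grid_adjacent_zigzag_run[of g, OF g] by auto
  show "successively (\<lambda>xs ys. grid_adjacent (last xs) (hd ys)) (map (zigzag_run g H W) [0..H + W - 2])"
    by (rule successively_map_upto)
      (simp add: grid_adjacent_zigzag_run_transition[of g, OF g] imin_le_imax[OF assms(1,2)])
qed

theorem mainTheorem2:
  fixes H W :: int
  assumes "H \<ge> 1" and "W \<ge> 1"
  shows "\<forall>ps \<in> {p_diag H W, p_antidiag H W, rev (p_diag H W), rev (p_antidiag H W)}.
           \<forall>k. k + 1 < length ps \<longrightarrow>
             norm (to_real_pt (ps ! (k + 1)) - to_real_pt (ps ! k)) \<le> sqrt 2"
proof (intro ballI allI impI)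
  fix ps k
  assume ps: "ps \<in> {p_diag H W, p_antidiag H W, rev (p_diag H W), rev (p_antidiag H W)}"
    and k: "k + 1 < length ps"
  have "successively grid_adjacent (p_diag H W)"
    unfolding p_diag_def diag_eq_zigzag_run
    by (rule successively_grid_adjacent_zigzag_scan[OF assms]) simp
  moreover have "successively grid_adjacent (p_antidiag H W)"
    unfolding p_antidiag_def antidiag_eq_zigzag_run
    by (rule successively_grid_adjacent_zigzag_scan[OF assms]) simp
  ultimately have "successively grid_adjacent ps"
    using ps by (auto simp add: successively_grid_adjacent_rev simp del: successively_rev)
  with k show "norm (to_real_pt (ps ! (k + 1)) - to_real_pt (ps ! k)) \<le> sqrt 2"
    by (simp add: successively_nth norm_to_real_pt_diff_le_sqrt2)
qed

end
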